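(* Let $\mathcal{H}$ be a complex Hilbert space, $R,S\in\mathbb{B}(\mathcal{H})$, and let $T=\begin{bmatrix}0&R\\ S&0\end{bmatrix}$, regarded as an operator on $\mathcal{H}\oplus\mathcal{H}$. If $(\|R\|+\|S\|)^2\le 2\,g(T)$, where \[ g(T)=\|T\|^2+\max\big(\alpha(T),\alpha(T^* )\big)-D(T), \] then \[ \omega(T)=\frac{\|R\|+\|S\|}{2}. \]
   Context: $\mathbb{B}(\mathcal{H})$ denotes the bounded linear operators on $\mathcal{H}$. For a bounded operator $A$ on a Hilbert space $\mathcal{K}$ (here $\mathcal{K}=\mathcal{H}\oplus\mathcal{H}$): $\omega(A)=\sup\{|\langle Ax,x\rangle| : x\in\mathcal{K},\ \|x\|=1\}$ (numerical radius); $\|A\|$ is the operator norm; $\alpha(A)=\inf_{\|x\|=1}\|Ax\|^2$; $D(A)=2\min(\|A_1\|^2,\|A_2\|^2)$ where $A_1=\frac{A+A^*}{2}$, $A_2=\frac{A-A^*}{2i}$. *)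

theory Defs
  imports "HOL-Analysis.Analysis"
begin

text \<open>A complex inner product space is a real inner product space (which supplies
  the norm, metric and topology) with a complex scalar multiplication and a
  complex (Hermitian, linear in the first argument) inner product whose real
  part is the real inner product, so that the norm is the one induced by cinner.\<close>

class complex_inner = real_inner +
  fixes scaleC :: "complex \<Rightarrow> 'a \<Rightarrow> 'a"  (infixr \<open>*\<^sub>C\<close> 75)
    and cinner :: "'a \<Rightarrow> 'a \<Rightarrow> complex"
  assumes scaleC_add_right: "a *\<^sub>C (x + y) = a *\<^sub>C x + a *\<^sub>C y"
    and scaleC_add_left: "(a + b) *\<^sub>C x = a *\<^sub>C x + b *\<^sub>C x"
    and scaleC_scaleC: "a *\<^sub>C (b *\<^sub>C x) = (a * b) *\<^sub>C x"
    and scaleC_one: "1 *\<^sub>C x = x"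
    and scaleR_scaleC: "r *\<^sub>R x = complex_of_real r *\<^sub>C x"
    and cinner_commute: "cinner x y = cnj (cinner y x)"
    and cinner_add_left: "cinner (x + y) z = cinner x z + cinner y z"
    and cinner_scaleC_left: "cinner (a *\<^sub>C x) y = a * cinner x y"
    and Re_cinner: "Re (cinner x y) = inner x y"

class chilbert_space = complex_inner + complete_space

instantiation prod :: (complex_inner, complex_inner) complex_inner
begin
definition scaleC_prod_def: "a *\<^sub>C x = (a *\<^sub>C fst x, a *\<^sub>C snd x)"
definition cinner_prod_def: "cinner x y = cinner (fst x) (fst y) + cinner (snd x) (snd y)"
instance
proof
  fix a b :: complex and x y z :: "'a \<times> 'b" and r :: real
  show "a *\<^sub>C (x + y) = a *\<^sub>C x + a *\<^sub>C y"
    by (simp add: scaleC_prod_def scaleC_add_right)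
  show "(a + b) *\<^sub>C x = a *\<^sub>C x + b *\<^sub>C x"
    by (simp add: scaleC_prod_def scaleC_add_left)
  show "a *\<^sub>C (b *\<^sub>C x) = (a * b) *\<^sub>C x"
    by (simp add: scaleC_prod_def scaleC_scaleC)
  show "1 *\<^sub>C x = x"
    by (simp add: scaleC_prod_def scaleC_one)
  show "r *\<^sub>R x = complex_of_real r *\<^sub>C x"
    by (simp add: scaleC_prod_def scaleR_prod_def scaleR_scaleC)
  show "cinner x y = cnj (cinner y x)"
    by (simp add: cinner_prod_def cinner_commute[of "fst x"] cinner_commute[of "snd x"])
  show "cinner (x + y) z = cinner x z + cinner y z"
    by (simp add: cinner_prod_def cinner_add_left)
  show "cinner (a *\<^sub>C x) y = a * cinner x y"
    by (simp add: cinner_prod_def scaleC_prod_def cinner_scaleC_left distrib_left)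
  show "Re (cinner x y) = inner x y"
    by (simp add: cinner_prod_def inner_prod_def Re_cinner)
qed
end

instance prod :: (chilbert_space, chilbert_space) chilbert_space ..

definition bounded_clinear :: "('a::complex_inner \<Rightarrow> 'b::complex_inner) \<Rightarrow> bool" where
  "bounded_clinear f \<longleftrightarrow>
     (\<forall>x y. f (x + y) = f x + f y) \<and> (\<forall>c x. f (c *\<^sub>C x) = c *\<^sub>C f x) \<and>
     (\<exists>K. \<forall>x. norm (f x) \<le> norm x * K)"

definition cadjoint :: "('a::complex_inner \<Rightarrow> 'a) \<Rightarrow> ('a \<Rightarrow> 'a)" where
  "cadjoint A = (\<lambda>y. THE z. \<forall>x. cinner (A x) y = cinner x z)"

definition numrad :: "('a::complex_inner \<Rightarrow> 'a) \<Rightarrow> real" where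
  "numrad A = Sup {cmod (cinner (A x) x) | x. norm x = 1}"

definition alpha_op :: "('a::complex_inner \<Rightarrow> 'a) \<Rightarrow> real" where
  "alpha_op A = Inf {(norm (A x))\<^sup>2 | x. norm x = 1}"

definition re_part :: "('a::complex_inner \<Rightarrow> 'a) \<Rightarrow> ('a \<Rightarrow> 'a)" where
  "re_part A = (\<lambda>x. (1/2) *\<^sub>C (A x + cadjoint A x))"

definition im_part :: "('a::complex_inner \<Rightarrow> 'a) \<Rightarrow> ('a \<Rightarrow> 'a)" where
  "im_part A = (\<lambda>x. (1/(2*\<i>)) *\<^sub>C (A x - cadjoint A x))"

definition D_op :: "('a::complex_inner \<Rightarrow> 'a) \<Rightarrow> real" where
  "D_op A = 2 * min ((onorm (re_part A))\<^sup>2) ((onorm (im_part A))\<^sup>2)"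

definition g_op :: "('a::complex_inner \<Rightarrow> 'a) \<Rightarrow> real" where
  "g_op T = (onorm T)\<^sup>2 + max (alpha_op T) (alpha_op (cadjoint T)) - D_op T"

definition offdiag :: "('a \<Rightarrow> 'a) \<Rightarrow> ('a \<Rightarrow> 'a) \<Rightarrow> ('a \<times> 'a \<Rightarrow> 'a \<times> 'a)" where
  "offdiag R S = (\<lambda>(x, y). (R y, S x))"

end

theory Submission
  imports Defs
begin

text \<open>
  For a unit vector \<open>(u, v)\<close> Cauchy-Schwarz gives
  \<open>\<bar>\<langle>T(u,v), (u,v)\<rangle>\<bar> \<le> (\<parallel>R\<parallel> + \<parallel>S\<parallel>) \<parallel>u\<parallel> \<parallel>v\<parallel> \<le> (\<parallel>R\<parallel> + \<parallel>S\<parallel>) / 2\<close>,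
  so \<open>\<omega>(T) \<le> (\<parallel>R\<parallel> + \<parallel>S\<parallel>) / 2\<close> always. Conversely, every operator satisfies
  \<open>g(T) \<le> 2 \<omega>(T)\<^sup>2\<close>: by polarization \<open>\<parallel>A\<^sub>1\<parallel>, \<parallel>A\<^sub>2\<parallel> \<le> \<omega>(T)\<close>, and by the parallelogram law
  \<open>\<parallel>Tx\<parallel>\<^sup>2 + \<parallel>T\<^sup>*x\<parallel>\<^sup>2 = 2 (\<parallel>A\<^sub>1x\<parallel>\<^sup>2 + \<parallel>A\<^sub>2x\<parallel>\<^sup>2) \<le> K \<parallel>x\<parallel>\<^sup>2\<close> with \<open>K = 2 (\<parallel>A\<^sub>1\<parallel>\<^sup>2 + \<parallel>A\<^sub>2\<parallel>\<^sup>2)\<close>.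
  Hence \<open>\<parallel>T\<parallel>\<^sup>2 + \<alpha>(T\<^sup>*) \<le> K\<close>, and since \<open>\<parallel>T\<parallel> \<le> \<parallel>T\<^sup>*\<parallel>\<close> also \<open>\<parallel>T\<parallel>\<^sup>2 + \<alpha>(T) \<le> K\<close>; thus
  \<open>g(T) \<le> K - D(T) = 2 max(\<parallel>A\<^sub>1\<parallel>\<^sup>2, \<parallel>A\<^sub>2\<parallel>\<^sup>2) \<le> 2 \<omega>(T)\<^sup>2\<close>, and the hypothesis yields
  \<open>(\<parallel>R\<parallel> + \<parallel>S\<parallel>)\<^sup>2 \<le> 4 \<omega>(T)\<^sup>2\<close>. As \<open>T\<^sup>*\<close> is given by a definite description, its existence
  has to be proved: it comes from the Riesz representation theorem, obtained by showing that a
  maximizing sequence of unit vectors for a functional is Cauchy.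
\<close>

lemma cinner_scaleC_right: "cinner (x::'a::complex_inner) (a *\<^sub>C y) = cnj a * cinner x y"
  by (metis cinner_commute cinner_scaleC_left complex_cnj_cnj complex_cnj_mult)

lemma cinner_add_right: "cinner (x::'a::complex_inner) (y + z) = cinner x y + cinner x z"
  by (metis cinner_commute cinner_add_left complex_cnj_add)

lemma cinner_scaleR_left: "cinner (r *\<^sub>R (x::'a::complex_inner)) y = of_real r * cinner x y"
  by (simp add: scaleR_scaleC cinner_scaleC_left)

lemma cinner_scaleR_right: "cinner (x::'a::complex_inner) (r *\<^sub>R y) = of_real r * cinner x y"
  by (simp add: scaleR_scaleC cinner_scaleC_right)

lemma cinner_minus_left: "cinner (- (x::'a::complex_inner)) y = - cinner x y"
  using cinner_scaleR_left[of "-1" x y] by simp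

lemma cinner_minus_right: "cinner (x::'a::complex_inner) (- y) = - cinner x y"
  using cinner_scaleR_right[of x "-1" y] by simp

lemma cinner_diff_left: "cinner ((x::'a::complex_inner) - y) z = cinner x z - cinner y z"
  using cinner_add_left[of x "-y" z] by (simp add: cinner_minus_left)

lemma cinner_diff_right: "cinner (x::'a::complex_inner) (y - z) = cinner x y - cinner x z"
  using cinner_add_right[of x y "-z"] by (simp add: cinner_minus_right)

lemma cinner_self: "cinner (x::'a::complex_inner) x = complex_of_real ((norm x)\<^sup>2)"
proof (rule complex_eqI)
  show "Re (cinner x x) = Re (complex_of_real ((norm x)\<^sup>2))"
    by (simp add: Re_cinner power2_norm_eq_inner)
  show "Im (cinner x x) = Im (complex_of_real ((norm x)\<^sup>2))"
    using cinner_commute[of x x] by (metis Im_complex_of_real Reals_cnj_iff complex_is_Real_iff)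
qed

lemma norm_scaleC: "norm (a *\<^sub>C (x::'a::complex_inner)) = cmod a * norm x"
proof -
  have "complex_of_real ((norm (a *\<^sub>C x))\<^sup>2) = (a * cnj a) * cinner x x"
    by (simp only: cinner_self[symmetric] cinner_scaleC_left cinner_scaleC_right mult_ac)
  also have "\<dots> = complex_of_real ((cmod a * norm x)\<^sup>2)"
    by (simp only: complex_norm_square[symmetric] cinner_self of_real_mult[symmetric] power_mult_distrib)
  finally have "(norm (a *\<^sub>C x))\<^sup>2 = (cmod a * norm x)\<^sup>2"
    by (simp only: of_real_eq_iff)
  then show ?thesis
    by (simp add: power2_eq_iff_nonneg)
qed

lemma norm_cinner_le: "cmod (cinner (x::'a::complex_inner) y) \<le> norm x * norm y"
proof (cases "cinner x y = 0")
  case True then show ?thesis by simp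
next
  case False
  define u where "u = cnj (cinner x y) / cmod (cinner x y)"
  have "cinner (u *\<^sub>C x) y = cmod (cinner x y)"
    using False by (simp add: u_def cinner_scaleC_left complex_norm_square[symmetric]
        power2_eq_square mult.commute)
  then have "cmod (cinner x y) = inner (u *\<^sub>C x) y"
    using Re_cinner[of "u *\<^sub>C x" y] by simp
  also have "\<dots> \<le> norm (u *\<^sub>C x) * norm y" by (rule norm_cauchy_schwarz)
  also have "\<dots> = norm x * norm y"
    using False by (simp add: norm_scaleC u_def norm_divide)
  finally show ?thesis .
qed

lemma cinner_ext:
  assumes "\<And>x::'a::complex_inner. cinner x a = cinner x b"
  shows "a = b"
proof -
  have "cinner (a - b) (a - b) = 0" using assms[of "a - b"] by (simp add: cinner_diff_right)
  then show ?thesis by (simp add: cinner_self)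
qed

lemma parallelogram_law:
  fixes x y :: "'a::real_inner"
  shows "(norm (x + y))\<^sup>2 + (norm (x - y))\<^sup>2 = 2 * (norm x)\<^sup>2 + 2 * (norm y)\<^sup>2"
  by (simp only: power2_norm_eq_inner inner_add_left inner_add_right inner_diff_left
      inner_diff_right inner_commute[of y x])

section \<open>Riesz representation and the adjoint\<close>

lemma quadratic_nonneg_imp_linear_coeff_zero:
  fixes a b :: real
  assumes "\<And>t. 0 \<le> a * t + b * t\<^sup>2"
  shows "a = 0"
proof (rule ccontr)
  assume "a \<noteq> 0"
  define s where "s = 1 / (\<bar>b\<bar> + 1)"
  have s: "0 < s" by (simp add: s_def add_pos_nonneg)
  have "b * s \<le> \<bar>b\<bar> * s" using s by (simp add: mult_right_mono)
  also have "\<dots> < 1" by (simp add: s_def divide_less_eq)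
  finally have "b * s < 1" .
  have "a * (- a * s) + b * (- a * s)\<^sup>2 = a\<^sup>2 * s * (b * s - 1)"
    by (simp add: power2_eq_square algebra_simps)
  also have "\<dots> < 0"
    using \<open>a \<noteq> 0\<close> s \<open>b * s < 1\<close> by (simp add: mult_pos_neg)
  finally show False using assms[of "- a * s"] by simp
qed

lemma exists_unit_gt_of_less_onorm:
  fixes f :: "'a::real_normed_vector \<Rightarrow> real"
  assumes f: "bounded_linear f" and "0 \<le> c" and "c < onorm f"
  shows "\<exists>w. norm w = 1 \<and> c < f w"
proof -
  have "bdd_above (range (\<lambda>x. norm (f x) / norm x))"
    using le_onorm[OF f] by (intro bdd_aboveI2)
  then obtain x where x: "c < \<bar>f x\<bar> / norm x"
    using assms(3) by (auto simp: onorm_def less_cSUP_iff)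
  with \<open>0 \<le> c\<close> have "x \<noteq> 0" "f x \<noteq> 0" by auto
  define w where "w = (sgn (f x) / norm x) *\<^sub>R x"
  have "norm w = 1" using \<open>x \<noteq> 0\<close> \<open>f x \<noteq> 0\<close> by (simp add: w_def abs_sgn)
  moreover have "f w = \<bar>f x\<bar> / norm x"
    by (simp add: w_def linear_scale[OF bounded_linear.linear[OF f]] sgn_if)
  ultimately show ?thesis using x by auto
qed

lemma onorm_mult_dist_sq_le:
  fixes f :: "'a::real_inner \<Rightarrow> real"
  assumes f: "bounded_linear f" and "norm u = 1" and "norm v = 1"
  shows "onorm f * (norm (u - v))\<^sup>2 \<le> 4 * ((onorm f - f u) + (onorm f - f v))"
proof -
  define s where "s = norm (u + v)"
  have "f u + f v \<le> onorm f * s"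
    using onorm[OF f, of "u + v"] linear_add[OF bounded_linear.linear[OF f]]
    by (simp add: s_def)
  have "(norm (u - v))\<^sup>2 = 4 - s\<^sup>2" using parallelogram_law[of u v] assms by (simp add: s_def)
  also have "\<dots> \<le> 4 * (2 - s)"
    using zero_le_power2[of "2 - s"] by (simp add: power2_eq_square algebra_simps)
  finally have "onorm f * (norm (u - v))\<^sup>2 \<le> onorm f * (4 * (2 - s))"
    using onorm_pos_le[OF f] by (rule mult_left_mono)
  with \<open>f u + f v \<le> onorm f * s\<close> show ?thesis by (simp add: algebra_simps)
qed

lemma Cauchy_if_tendsto_onorm:
  fixes f :: "'a::real_inner \<Rightarrow> real"
  assumes f: "bounded_linear f" and F: "0 < onorm f"
    and X: "\<And>n. norm (X n) = 1" and lim: "(\<lambda>n. f (X n)) \<longlonglongrightarrow> onorm f"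
  shows "Cauchy X"
proof (rule CauchyI)
  fix e :: real assume "0 < e"
  define d where "d = onorm f * e\<^sup>2 / 8"
  have "0 < d" using F \<open>0 < e\<close> by (simp add: d_def)
  then obtain N where N: "\<forall>n\<ge>N. \<bar>f (X n) - onorm f\<bar> < d"
    using LIMSEQ_D[OF lim] by (auto simp: real_norm_def)
  have "norm (X m - X n) < e" if "m \<ge> N" "n \<ge> N" for m n
  proof -
    have "onorm f * (norm (X m - X n))\<^sup>2 \<le> 4 * ((onorm f - f (X m)) + (onorm f - f (X n)))"
      by (rule onorm_mult_dist_sq_le[OF f X X])
    also have "\<dots> < 8 * d"
    proof -
      have a: "onorm f - f (X m) < d" using N that(1) by fastforce
      have b: "onorm f - f (X n) < d" using N that(2) by fastforce
      show ?thesis using a b by (simp add: algebra_simps)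
    qed
    also have "\<dots> = onorm f * e\<^sup>2" by (simp add: d_def)
    finally have "(norm (X m - X n))\<^sup>2 < e\<^sup>2" using F by simp
    with \<open>0 < e\<close> show ?thesis by (simp add: power_less_imp_less_base)
  qed
  then show "\<exists>M. \<forall>m\<ge>M. \<forall>n\<ge>M. norm (X m - X n) < e" by blast
qed

lemma onorm_attained:
  fixes f :: "'a::{real_inner,complete_space} \<Rightarrow> real"
  assumes f: "bounded_linear f" and F: "0 < onorm f"
  shows "\<exists>x. norm x = 1 \<and> f x = onorm f"
proof -
  define c where "c n = (1 - inverse (real (Suc n))) * onorm f" for n
  have "0 \<le> c n" "c n < onorm f" for n
    using F by (simp_all add: c_def inverse_le_1_iff)
  then have "\<forall>n. \<exists>w. norm w = 1 \<and> c n < f w"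
    using exists_unit_gt_of_less_onorm[OF f] by blast
  then obtain X where X: "\<And>n. norm (X n) = 1" "\<And>n. c n < f (X n)"
    by (auto simp: choice_iff)
  have upper: "f (X n) \<le> onorm f" for n
    using onorm[OF f, of "X n"] X(1) by simp
  have "c \<longlonglongrightarrow> (1 - 0) * onorm f"
    unfolding c_def by (intro tendsto_intros LIMSEQ_inverse_real_of_nat)
  then have "c \<longlonglongrightarrow> onorm f" by simp
  have lim: "(\<lambda>n. f (X n)) \<longlonglongrightarrow> onorm f"
  proof (rule tendsto_sandwich[where f = c and h = "\<lambda>_. onorm f"])
    show "\<forall>\<^sub>F n in sequentially. c n \<le> f (X n)" using X(2) by (simp add: less_imp_le)
    show "\<forall>\<^sub>F n in sequentially. f (X n) \<le> onorm f" using upper by simp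
  qed (rule \<open>c \<longlonglongrightarrow> onorm f\<close>, rule tendsto_const)
  obtain x where x: "X \<longlonglongrightarrow> x"
    using Cauchy_convergent[OF Cauchy_if_tendsto_onorm[OF f F X(1) lim]] unfolding convergent_def by blast
  have "(\<lambda>n. norm (X n)) \<longlonglongrightarrow> norm x" by (rule tendsto_norm[OF x])
  then have "norm x = 1" using X(1) by (simp add: LIMSEQ_const_iff)
  moreover have "f x = onorm f"
    using LIMSEQ_unique[OF bounded_linear.tendsto[OF f x] lim] .
  ultimately show ?thesis by blast
qed

lemma eq_onorm_mult_inner_if_attained:
  fixes f :: "'a::real_inner \<Rightarrow> real"
  assumes f: "bounded_linear f" and x: "norm x = 1" "f x = onorm f"
  shows "f y = onorm f * inner x y"
proof -
  interpret f: bounded_linear f by (rule f)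
  define F where "F = onorm f"
  have "0 \<le> (2 * (F\<^sup>2 * inner x y - F * f y)) * t + (F\<^sup>2 * (norm y)\<^sup>2 - (f y)\<^sup>2) * t\<^sup>2" for t
  proof -
    have "\<bar>F + t * f y\<bar> \<le> F * norm (x + t *\<^sub>R y)"
      using onorm[OF f, of "x + t *\<^sub>R y"] x by (simp add: f.add f.scaleR F_def)
    then have "(F + t * f y)\<^sup>2 \<le> (F * norm (x + t *\<^sub>R y))\<^sup>2"
      by (metis abs_ge_zero order_trans power2_abs power_mono)
    moreover have "(norm (x + t *\<^sub>R y))\<^sup>2 = 1 + 2 * t * inner x y + t\<^sup>2 * (norm y)\<^sup>2"
      using dot_norm[of x "t *\<^sub>R y"] x(1) by (simp add: power_mult_distrib algebra_simps)
    ultimately show ?thesis by (simp add: power2_eq_square algebra_simps)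
  qed
  then have "2 * (F\<^sup>2 * inner x y - F * f y) = 0"
    by (rule quadratic_nonneg_imp_linear_coeff_zero)
  then have "F * (F * inner x y - f y) = 0"
    by (simp add: power2_eq_square algebra_simps)
  moreover have "F = 0 \<Longrightarrow> f y = 0" using onorm_eq_0[OF f] by (simp add: F_def)
  ultimately show ?thesis by (auto simp: F_def)
qed

lemma real_Riesz_representation:
  fixes f :: "'a::{real_inner,complete_space} \<Rightarrow> real"
  assumes f: "bounded_linear f"
  shows "\<exists>z. \<forall>x. f x = inner x z"
proof (cases "onorm f = 0")
  case True
  then show ?thesis using onorm_eq_0[OF f] by (intro exI[of _ 0]) simp
next
  case False
  then have "0 < onorm f" using onorm_pos_le[OF f] by simp
  then obtain x where "norm x = 1" "f x = onorm f" using onorm_attained[OF f] by blast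
  then show ?thesis
    using eq_onorm_mult_inner_if_attained[OF f] by (intro exI[of _ "onorm f *\<^sub>R x"]) (simp add: inner_commute)
qed

lemma bounded_clinear_imp_bounded_linear:
  assumes "bounded_clinear f"
  shows "bounded_linear f"
proof -
  have add: "\<And>x y. f (x + y) = f x + f y" and scale: "\<And>c x. f (c *\<^sub>C x) = c *\<^sub>C f x"
    using assms by (simp_all add: bounded_clinear_def)
  obtain K where "\<And>x. norm (f x) \<le> norm x * K"
    using assms by (auto simp add: bounded_clinear_def)
  then show ?thesis
    by (intro bounded_linear_intro[OF add]) (simp_all add: scaleR_scaleC scale)
qed

text \<open>Riesz for the underlying real inner product suffices: \<open>cinner\<close> is determined by its real
  part \<open>inner\<close>, as \<open>Im w = - Re (\<i> * w)\<close>.\<close>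
lemma ex_cinner_adjoint:
  fixes A :: "'a::chilbert_space \<Rightarrow> 'a"
  assumes A: "bounded_clinear A"
  shows "\<exists>z. \<forall>x. cinner (A x) y = cinner x z"
proof -
  have "bounded_linear (\<lambda>x. inner (A x) y)"
    using bounded_linear_inner_left bounded_clinear_imp_bounded_linear[OF A]
    by (rule bounded_linear_compose)
  then obtain z where z: "\<And>x. inner (A x) y = inner x z"
    using real_Riesz_representation by blast
  have "cinner (A x) y = cinner x z" for x
  proof (rule complex_eqI)
    show "Re (cinner (A x) y) = Re (cinner x z)" by (simp add: z Re_cinner)
    have "A (\<i> *\<^sub>C x) = \<i> *\<^sub>C A x" using A by (simp add: bounded_clinear_def)
    then show "Im (cinner (A x) y) = Im (cinner x z)"
      using z[of "\<i> *\<^sub>C x"] by (simp add: cinner_scaleC_left Re_cinner[symmetric])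
  qed
  then show ?thesis by blast
qed

lemma cinner_cadjoint:
  fixes A :: "'a::chilbert_space \<Rightarrow> 'a"
  assumes "bounded_clinear A"
  shows "cinner (A x) y = cinner x (cadjoint A y)"
proof -
  have "\<exists>!z. \<forall>x. cinner (A x) y = cinner x z"
    using ex_cinner_adjoint[OF assms] by (auto intro: cinner_ext)
  then show ?thesis
    unfolding cadjoint_def by (rule theI'[THEN spec])
qed

lemma cinner_cadjoint_left:
  fixes A :: "'a::chilbert_space \<Rightarrow> 'a"
  assumes "bounded_clinear A"
  shows "cinner (cadjoint A x) y = cnj (cinner (A y) x)"
  by (simp add: cinner_cadjoint[OF assms] cinner_commute[of "cadjoint A x"])

section \<open>Numerical radius and the Cartesian decomposition\<close>

text \<open>The recurring hypothesis \<open>\<exists>z. norm z = 1\<close> excludes the zero space, on which \<open>numrad\<close> and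
  \<open>alpha_op\<close> are the junk values \<open>Sup {}\<close> and \<open>Inf {}\<close>.\<close>

lemma exists_unit_scaleR_eq:
  fixes x :: "'a::real_normed_vector"
  assumes "\<exists>z::'a. norm z = 1"
  shows "\<exists>w. norm w = 1 \<and> x = norm x *\<^sub>R w"
proof (cases "x = 0")
  case True then show ?thesis using assms by auto
next
  case False then show ?thesis by (intro exI[of _ "sgn x"]) (simp add: norm_sgn sgn_div_norm)
qed

lemma norm_cinner_le_numrad:
  fixes T :: "'a::complex_inner \<Rightarrow> 'a"
  assumes T: "bounded_linear T" and "norm w = 1"
  shows "cmod (cinner (T w) w) \<le> numrad T"
  unfolding numrad_def
proof (rule cSup_upper)
  show "bdd_above {cmod (cinner (T x) x) |x. norm x = 1}"
  proof (rule bdd_aboveI)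
    fix r assume "r \<in> {cmod (cinner (T x) x) |x. norm x = 1}"
    then obtain x where "norm x = 1" "r = cmod (cinner (T x) x)" by blast
    then show "r \<le> onorm T"
      using norm_cinner_le[of "T x" x] onorm[OF T, of x] by simp
  qed
qed (use assms(2) in blast)

lemma norm_cinner_le_numrad_mult:
  fixes T :: "'a::complex_inner \<Rightarrow> 'a"
  assumes T: "bounded_linear T" and "\<exists>z::'a. norm z = 1"
  shows "cmod (cinner (T x) x) \<le> numrad T * (norm x)\<^sup>2"
proof -
  obtain w where w: "norm w = 1" "x = norm x *\<^sub>R w"
    using exists_unit_scaleR_eq[OF assms(2)] by blast
  have "cinner (T x) x = complex_of_real ((norm x)\<^sup>2) * cinner (T w) w"
    by (subst (1 2) w(2)) (simp add: linear_scale[OF bounded_linear.linear[OF T]]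
        cinner_scaleR_left cinner_scaleR_right power2_eq_square)
  then have "cmod (cinner (T x) x) = (norm x)\<^sup>2 * cmod (cinner (T w) w)"
    by (simp add: norm_mult norm_power)
  also have "\<dots> \<le> (norm x)\<^sup>2 * numrad T"
    by (rule mult_left_mono[OF norm_cinner_le_numrad[OF T w(1)]]) simp
  finally show ?thesis by (simp add: mult.commute)
qed

lemma numrad_nonneg:
  fixes T :: "'a::complex_inner \<Rightarrow> 'a"
  assumes "bounded_linear T" and "\<exists>z::'a. norm z = 1"
  shows "0 \<le> numrad T"
  using assms norm_cinner_le_numrad by (meson norm_ge_zero order_trans)

lemma polarization_Re_bound:
  fixes T :: "'a::complex_inner \<Rightarrow> 'a"
  assumes T: "bounded_linear T" and \<omega>: "\<And>z. cmod (cinner (T z) z) \<le> \<omega> * (norm z)\<^sup>2"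
    and c: "cmod c \<le> 1/2"
  shows "2 * (Re (c * cinner (T u) v) + Re (c * cinner (T v) u)) \<le> \<omega> * ((norm u)\<^sup>2 + (norm v)\<^sup>2)"
proof -
  interpret T: bounded_linear T by (rule T)
  define q where "q u v = Re (c * cinner (T u) v) + Re (c * cinner (T v) u)" for u v
  have diag: "\<bar>q z z\<bar> \<le> \<omega> * (norm z)\<^sup>2" for z
  proof -
    have "\<bar>q z z\<bar> = 2 * \<bar>Re (c * cinner (T z) z)\<bar>"
      by (simp only: q_def mult_2[symmetric] abs_mult abs_numeral)
    also have "\<dots> \<le> 2 * (cmod c * cmod (cinner (T z) z))"
      using abs_Re_le_cmod[of "c * cinner (T z) z"] by (simp add: norm_mult)
    also have "\<dots> \<le> cmod (cinner (T z) z)"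
      using c mult_right_mono[OF c, of "cmod (cinner (T z) z)"] by simp
    finally show ?thesis using \<omega>[of z] by simp
  qed
  have "4 * q u v = q (u + v) (u + v) - q (u - v) (u - v)"
    by (simp add: q_def T.add T.diff cinner_add_left cinner_add_right cinner_diff_left
        cinner_diff_right algebra_simps)
  also have "\<dots> \<le> \<omega> * ((norm (u + v))\<^sup>2 + (norm (u - v))\<^sup>2)"
    using diag[of "u + v"] diag[of "u - v"] by (simp add: algebra_simps abs_le_iff)
  also have "\<dots> = 2 * \<omega> * ((norm u)\<^sup>2 + (norm v)\<^sup>2)"
    using parallelogram_law[of u v] by (simp add: algebra_simps)
  finally show ?thesis by (simp add: q_def)
qed

lemma norm_le_if_inner_le:
  fixes h x :: "'a::real_inner"
  assumes "0 \<le> \<omega>" and h: "\<And>v. 2 * inner h v \<le> \<omega> * ((norm x)\<^sup>2 + (norm v)\<^sup>2)"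
  shows "norm h \<le> \<omega> * norm x"
proof (cases "\<omega> = 0")
  case True
  then have "inner h h \<le> 0" using h[of h] by simp
  then show ?thesis using True inner_gt_zero_iff[of h] by fastforce
next
  case False
  with assms(1) have "0 < \<omega>" by simp
  have "2 * (norm h)\<^sup>2 / \<omega> \<le> \<omega> * (norm x)\<^sup>2 + (norm h)\<^sup>2 / \<omega>"
    using h[of "(1 / \<omega>) *\<^sub>R h"] \<open>0 < \<omega>\<close>
    by (simp add: power2_norm_eq_inner[symmetric] power2_eq_square field_simps)
  then have "(norm h)\<^sup>2 \<le> (\<omega> * norm x)\<^sup>2"
    using \<open>0 < \<omega>\<close> by (simp add: field_simps power2_eq_square)
  then show ?thesis
    using \<open>0 < \<omega>\<close> by (simp add: power2_le_iff_abs_le)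
qed

lemma norm_le_numrad_if_Re_cinner_eq:
  fixes T H :: "'a::complex_inner \<Rightarrow> 'a"
  assumes T: "bounded_linear T" and ex: "\<exists>z::'a. norm z = 1" and "cmod c \<le> 1/2"
    and H: "\<And>u v. Re (cinner (H u) v) = Re (c * cinner (T u) v) + Re (c * cinner (T v) u)"
  shows "norm (H x) \<le> numrad T * norm x"
proof (rule norm_le_if_inner_le[OF numrad_nonneg[OF T ex]])
  fix v
  show "2 * inner (H x) v \<le> numrad T * ((norm x)\<^sup>2 + (norm v)\<^sup>2)"
    using polarization_Re_bound[OF T norm_cinner_le_numrad_mult[OF T ex] \<open>cmod c \<le> 1/2\<close>]
    by (simp add: Re_cinner[symmetric] H)
qed

lemma norm_re_part_le_numrad:
  fixes T :: "'a::chilbert_space \<Rightarrow> 'a"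
  assumes T: "bounded_clinear T" and ex: "\<exists>z::'a. norm z = 1"
  shows "norm (re_part T x) \<le> numrad T * norm x"
  by (rule norm_le_numrad_if_Re_cinner_eq[OF bounded_clinear_imp_bounded_linear[OF T] ex, of "1/2"])
    (simp_all add: re_part_def cinner_scaleC_left cinner_add_left cinner_cadjoint_left[OF T])

lemma norm_im_part_le_numrad:
  fixes T :: "'a::chilbert_space \<Rightarrow> 'a"
  assumes T: "bounded_clinear T" and ex: "\<exists>z::'a. norm z = 1"
  shows "norm (im_part T x) \<le> numrad T * norm x"
proof (rule norm_le_numrad_if_Re_cinner_eq[OF bounded_clinear_imp_bounded_linear[OF T] ex, of "- \<i> / 2"])
  have "1 / (2 * \<i>) = - \<i> / 2" by (simp add: field_simps)
  then show "Re (cinner (im_part T u) v) = Re (- \<i> / 2 * cinner (T u) v) + Re (- \<i> / 2 * cinner (T v) u)"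
    for u v by (simp add: im_part_def cinner_scaleC_left cinner_diff_left cinner_cadjoint_left[OF T])
        (simp add: field_simps)
qed (simp add: norm_divide)

lemma norm_le_onorm_if_bounded:
  assumes "0 \<le> b" and "\<And>x. norm (f x) \<le> b * norm x"
  shows "norm (f x) \<le> onorm f * norm x" and "0 \<le> onorm f"
proof -
  have "bdd_above (range (\<lambda>x. norm (f x) / norm x))"
    using assms by (intro bdd_aboveI2[where M = b]) (simp add: divide_le_eq mult.commute)
  then have le: "norm (f y) / norm y \<le> onorm f" for y
    unfolding onorm_def by (rule cSUP_upper[OF UNIV_I])
  show "0 \<le> onorm f" using le[of 0] by simp
  show "norm (f x) \<le> onorm f * norm x"
    using le[of x] assms(2)[of x] by (cases "x = 0") (simp_all add: divide_le_eq)
qed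

section \<open>The inequality \<open>g(T) \<le> 2 \<omega>(T)\<^sup>2\<close>\<close>

lemma norm_sq_add_norm_cadjoint_sq:
  "(norm (T x))\<^sup>2 + (norm (cadjoint T x))\<^sup>2
     = 2 * ((norm (re_part T x))\<^sup>2 + (norm (im_part T x))\<^sup>2)"
proof -
  have re: "norm (re_part T x) = norm (T x + cadjoint T x) / 2"
    by (simp add: re_part_def norm_scaleC)
  have im: "norm (im_part T x) = norm (T x - cadjoint T x) / 2"
    by (simp add: im_part_def norm_scaleC norm_divide norm_mult)
  show ?thesis
    unfolding re im using parallelogram_law[of "T x" "cadjoint T x"] by (simp add: power_divide)
qed

lemma alpha_op_le_norm_sq:
  assumes "norm w = 1"
  shows "alpha_op A \<le> (norm (A w))\<^sup>2"
  unfolding alpha_op_def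
proof (rule cInf_lower)
  show "(norm (A w))\<^sup>2 \<in> {(norm (A x))\<^sup>2 |x. norm x = 1}" using assms by blast
  show "bdd_below {(norm (A x))\<^sup>2 |x. norm x = 1}" by (rule bdd_belowI[of _ 0]) auto
qed

lemma alpha_op_mult_norm_sq_le:
  fixes A :: "'a::complex_inner \<Rightarrow> 'a"
  assumes A: "bounded_linear A" and "\<exists>z::'a. norm z = 1"
  shows "alpha_op A * (norm x)\<^sup>2 \<le> (norm (A x))\<^sup>2"
proof -
  obtain w where w: "norm w = 1" "x = norm x *\<^sub>R w"
    using exists_unit_scaleR_eq[OF assms(2)] by blast
  have "A x = norm x *\<^sub>R A w"
    by (subst w(2)) (rule linear_scale[OF bounded_linear.linear[OF A]])
  then show ?thesis
    using mult_right_mono[OF alpha_op_le_norm_sq[OF w(1), of A], of "(norm x)\<^sup>2"]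
    by (simp add: power_mult_distrib mult.commute)
qed

text \<open>\<open>B\<close> need not be linear, so this applies to the adjoint directly: \<open>alpha_op B\<close> is only
  compared with \<open>norm (B w)\<close> at a unit vector \<open>w\<close> with \<open>x = norm x *\<^sub>R w\<close>.\<close>
lemma norm_sq_le_sub_alpha_op:
  fixes A B :: "'a::complex_inner \<Rightarrow> 'a"
  assumes A: "bounded_linear A" and "\<exists>z::'a. norm z = 1"
    and K: "\<And>x. (norm (A x))\<^sup>2 + (norm (B x))\<^sup>2 \<le> K * (norm x)\<^sup>2"
  shows "(norm (A x))\<^sup>2 \<le> (K - alpha_op B) * (norm x)\<^sup>2"
proof -
  obtain w where w: "norm w = 1" "x = norm x *\<^sub>R w"
    using exists_unit_scaleR_eq[OF assms(2)] by blast
  have "A x = norm x *\<^sub>R A w"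
    by (subst w(2)) (rule linear_scale[OF bounded_linear.linear[OF A]])
  moreover have "(norm (A w))\<^sup>2 \<le> K - alpha_op B"
    using K[of w] alpha_op_le_norm_sq[OF w(1), of B] w(1) by simp
  then have "(norm x)\<^sup>2 * (norm (A w))\<^sup>2 \<le> (norm x)\<^sup>2 * (K - alpha_op B)"
    by (rule mult_left_mono) simp
  ultimately show ?thesis by (simp add: power_mult_distrib mult.commute)
qed

lemma onorm_sq_le:
  fixes A :: "'a::real_normed_vector \<Rightarrow> 'b::real_normed_vector"
  assumes A: "bounded_linear A" and "\<exists>z::'a. norm z = 1"
    and L: "\<And>x. (norm (A x))\<^sup>2 \<le> L * (norm x)\<^sup>2"
  shows "(onorm A)\<^sup>2 \<le> L"
proof -
  obtain z :: 'a where "norm z = 1" using assms(2) by blast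
  then have "(norm (A z))\<^sup>2 \<le> L" using L[of z] by simp
  then have "0 \<le> L" by (rule order_trans[OF zero_le_power2])
  have "norm (A x) \<le> sqrt L * norm x" for x
    using real_le_rsqrt[OF L[of x]] by (simp add: real_sqrt_mult)
  then have "onorm A \<le> sqrt L" by (rule onorm_bound[rotated]) (simp add: \<open>0 \<le> L\<close>)
  then show ?thesis
    using power_mono[OF _ onorm_pos_le[OF A], of "sqrt L" 2] \<open>0 \<le> L\<close> by simp
qed

lemma norm_sq_le_if_cadjoint_norm_sq_le:
  fixes T :: "'a::chilbert_space \<Rightarrow> 'a"
  assumes T: "bounded_clinear T" and "0 \<le> L"
    and L: "\<And>y. (norm (cadjoint T y))\<^sup>2 \<le> L * (norm y)\<^sup>2"
  shows "(norm (T x))\<^sup>2 \<le> L * (norm x)\<^sup>2"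
proof -
  have adj: "norm (cadjoint T y) \<le> sqrt L * norm y" for y
    using real_le_rsqrt[OF L[of y]] by (simp add: real_sqrt_mult)
  have "(norm (T x))\<^sup>2 = Re (cinner x (cadjoint T (T x)))"
    by (simp add: cinner_cadjoint[OF T, symmetric] cinner_self)
  also have "\<dots> \<le> norm x * norm (cadjoint T (T x))"
    using complex_Re_le_cmod norm_cinner_le order_trans by blast
  also have "\<dots> \<le> norm x * (sqrt L * norm (T x))"
    by (rule mult_left_mono[OF adj norm_ge_zero])
  finally have "norm (T x) \<le> sqrt L * norm x"
    using \<open>0 \<le> L\<close> by (cases "T x = 0") (simp_all add: power2_eq_square algebra_simps)
  then have "(norm (T x))\<^sup>2 \<le> (sqrt L * norm x)\<^sup>2" by (rule power_mono) simp
  then show ?thesis using \<open>0 \<le> L\<close> by (simp add: power_mult_distrib)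
qed

lemma norm_sq_add_norm_cadjoint_sq_le:
  fixes T :: "'a::chilbert_space \<Rightarrow> 'a"
  assumes T: "bounded_clinear T" and ex: "\<exists>z::'a. norm z = 1"
  shows "(norm (T x))\<^sup>2 + (norm (cadjoint T x))\<^sup>2
    \<le> 2 * ((onorm (re_part T))\<^sup>2 + (onorm (im_part T))\<^sup>2) * (norm x)\<^sup>2"
proof -
  have \<omega>: "0 \<le> numrad T" by (rule numrad_nonneg[OF bounded_clinear_imp_bounded_linear[OF T] ex])
  have "(norm (re_part T x))\<^sup>2 \<le> (onorm (re_part T) * norm x)\<^sup>2"
    using norm_le_onorm_if_bounded(1)[OF \<omega> norm_re_part_le_numrad[OF T ex]] by (simp add: power_mono)
  moreover have "(norm (im_part T x))\<^sup>2 \<le> (onorm (im_part T) * norm x)\<^sup>2"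
    using norm_le_onorm_if_bounded(1)[OF \<omega> norm_im_part_le_numrad[OF T ex]] by (simp add: power_mono)
  ultimately show ?thesis
    by (simp add: norm_sq_add_norm_cadjoint_sq power_mult_distrib algebra_simps)
qed

theorem g_op_le_two_numrad_sq:
  fixes T :: "'a::chilbert_space \<Rightarrow> 'a"
  assumes T: "bounded_clinear T" and ex: "\<exists>z::'a. norm z = 1"
  shows "g_op T \<le> 2 * (numrad T)\<^sup>2"
proof -
  have T': "bounded_linear T" by (rule bounded_clinear_imp_bounded_linear[OF T])
  have \<omega>: "0 \<le> numrad T" by (rule numrad_nonneg[OF T' ex])
  define a1 where "a1 = onorm (re_part T)"
  define a2 where "a2 = onorm (im_part T)"
  define K where "K = 2 * (a1\<^sup>2 + a2\<^sup>2)"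
  have K: "(norm (T x))\<^sup>2 + (norm (cadjoint T x))\<^sup>2 \<le> K * (norm x)\<^sup>2" for x
    unfolding K_def a1_def a2_def by (rule norm_sq_add_norm_cadjoint_sq_le[OF T ex])
  have "(onorm T)\<^sup>2 \<le> K - alpha_op (cadjoint T)"
    by (rule onorm_sq_le[OF T' ex norm_sq_le_sub_alpha_op[OF T' ex K]])
  moreover have "(onorm T)\<^sup>2 \<le> K - alpha_op T"
  proof (rule onorm_sq_le[OF T' ex norm_sq_le_if_cadjoint_norm_sq_le[OF T]])
    obtain w :: 'a where "norm w = 1" using ex by blast
    then have "(norm (T w))\<^sup>2 + (norm (cadjoint T w))\<^sup>2 \<le> K" using K[of w] by simp
    then show "0 \<le> K - alpha_op T"
      using alpha_op_le_norm_sq[OF \<open>norm w = 1\<close>, of T] zero_le_power2[of "norm (cadjoint T w)"]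
      by linarith
    show "(norm (cadjoint T y))\<^sup>2 \<le> (K - alpha_op T) * (norm y)\<^sup>2" for y
      using K[of y] alpha_op_mult_norm_sq_le[OF T' ex, of y] by (simp add: algebra_simps)
  qed
  ultimately have "g_op T \<le> K - 2 * min (a1\<^sup>2) (a2\<^sup>2)"
    by (simp add: g_op_def D_op_def a1_def a2_def)
  also have "\<dots> = 2 * max (a1\<^sup>2) (a2\<^sup>2)" by (simp add: K_def max_def min_def)
  also have "\<dots> \<le> 2 * (numrad T)\<^sup>2"
  proof -
    have "0 \<le> a1" "a1 \<le> numrad T" "0 \<le> a2" "a2 \<le> numrad T"
      unfolding a1_def a2_def
      using norm_le_onorm_if_bounded(2)[OF \<omega> norm_re_part_le_numrad[OF T ex]]
        norm_le_onorm_if_bounded(2)[OF \<omega> norm_im_part_le_numrad[OF T ex]]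
        onorm_bound[OF \<omega> norm_re_part_le_numrad[OF T ex]]
        onorm_bound[OF \<omega> norm_im_part_le_numrad[OF T ex]] by auto
    then show ?thesis by (simp add: power_mono)
  qed
  finally show ?thesis .
qed

section \<open>Off-diagonal block operators\<close>

lemma bounded_clinear_offdiag:
  fixes R S :: "'a::complex_inner \<Rightarrow> 'a"
  assumes R: "bounded_clinear R" and S: "bounded_clinear S"
  shows "bounded_clinear (offdiag R S)"
proof -
  interpret R: bounded_linear R by (rule bounded_clinear_imp_bounded_linear[OF R])
  interpret S: bounded_linear S by (rule bounded_clinear_imp_bounded_linear[OF S])
  obtain KR where KR: "0 < KR" "\<And>x. norm (R x) \<le> norm x * KR" using R.pos_bounded by blast
  obtain KS where KS: "0 < KS" "\<And>x. norm (S x) \<le> norm x * KS" using S.pos_bounded by blast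
  have bound: "norm (offdiag R S (x, y)) \<le> norm (x, y) * (KR + KS)" for x y
  proof -
    have "norm (R y) \<le> norm (x, y) * KR"
      using KR(2)[of y] mult_right_mono[OF norm_snd_le[of y x] less_imp_le[OF KR(1)]] by simp
    moreover have "norm (S x) \<le> norm (x, y) * KS"
      using KS(2)[of x] mult_right_mono[OF norm_fst_le[of x y] less_imp_le[OF KS(1)]] by simp
    ultimately show ?thesis
      using norm_Pair_le[of "R y" "S x"] by (simp add: offdiag_def algebra_simps)
  qed
  have "R (c *\<^sub>C x) = c *\<^sub>C R x" "S (c *\<^sub>C x) = c *\<^sub>C S x" for c x
    using R S by (simp_all add: bounded_clinear_def)
  then show ?thesis
    unfolding bounded_clinear_def using bound
    by (simp add: offdiag_def R.add S.add scaleC_prod_def split_paired_all) blast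
qed

lemma numrad_offdiag_le:
  fixes R S :: "'a::complex_inner \<Rightarrow> 'a"
  assumes R: "bounded_linear R" and S: "bounded_linear S" and ex: "\<exists>z::'a \<times> 'a. norm z = 1"
  shows "numrad (offdiag R S) \<le> (onorm R + onorm S) / 2"
  unfolding numrad_def
proof (rule cSup_least)
  show "{cmod (cinner (offdiag R S p) p) |p. norm p = 1} \<noteq> {}" using ex by blast
  fix r assume "r \<in> {cmod (cinner (offdiag R S p) p) |p. norm p = 1}"
  then obtain u v where uv: "norm (u, v) = 1" and r: "r = cmod (cinner (offdiag R S (u, v)) (u, v))"
    by auto
  have "r = cmod (cinner (R v) u + cinner (S u) v)"
    by (simp add: r offdiag_def cinner_prod_def)
  also have "\<dots> \<le> cmod (cinner (R v) u) + cmod (cinner (S u) v)"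
    by (rule norm_triangle_ineq)
  also have "\<dots> \<le> norm (R v) * norm u + norm (S u) * norm v"
    by (rule add_mono norm_cinner_le)+
  also have "\<dots> \<le> (onorm R * norm v) * norm u + (onorm S * norm u) * norm v"
    by (intro add_mono mult_right_mono onorm R S norm_ge_zero)
  also have "\<dots> = (onorm R + onorm S) * (norm u * norm v)" by (simp add: algebra_simps)
  also have "\<dots> \<le> (onorm R + onorm S) * (1 / 2)"
  proof (rule mult_left_mono)
    show "norm u * norm v \<le> 1 / 2"
      using uv zero_le_power2[of "norm u - norm v"] by (simp add: norm_Pair power2_eq_square algebra_simps)
    show "0 \<le> onorm R + onorm S" using onorm_pos_le[OF R] onorm_pos_le[OF S] by simp
  qed
  finally show "r \<le> (onorm R + onorm S) / 2" by simp
qed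

theorem corollary2p4:
  fixes R S :: "'a::chilbert_space \<Rightarrow> 'a"
  assumes "bounded_clinear R" and "bounded_clinear S"
    and "\<exists>x::'a. x \<noteq> 0"
    and "(onorm R + onorm S)\<^sup>2 \<le> 2 * g_op (offdiag R S)"
  shows "numrad (offdiag R S) = (onorm R + onorm S) / 2"
proof -
  let ?T = "offdiag R S"
  have T: "bounded_clinear ?T" by (rule bounded_clinear_offdiag[OF assms(1,2)])
  have T': "bounded_linear ?T" by (rule bounded_clinear_imp_bounded_linear[OF T])
  obtain a :: 'a where "a \<noteq> 0" using assms(3) by blast
  then have ex: "\<exists>z::'a \<times> 'a. norm z = 1"
    by (intro exI[of _ "(sgn a, 0)"]) (simp add: norm_sgn)
  have "(onorm R + onorm S)\<^sup>2 \<le> (2 * numrad ?T)\<^sup>2"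
    using assms(4) g_op_le_two_numrad_sq[OF T ex] by (simp add: power2_eq_square)
  then have "onorm R + onorm S \<le> 2 * numrad ?T"
    by (rule power2_le_imp_le) (simp add: numrad_nonneg[OF T' ex])
  moreover have "numrad ?T \<le> (onorm R + onorm S) / 2"
    by (rule numrad_offdiag_le[OF bounded_clinear_imp_bounded_linear[OF assms(1)]
          bounded_clinear_imp_bounded_linear[OF assms(2)] ex])
  ultimately show ?thesis by simp
qed

end
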